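(* Let $\mathcal{U}$ be a subspace of $\mathbb{R}^n$ with $\mu(\mathcal{U})<1/2$. Then there exists $\lambda\in\mathbb{R}^n$ with $\lambda\ge 0$ entrywise such that $\operatorname{diag}\big(P_{\mathcal{U}^\perp}\operatorname{diag}^*(\lambda)P_{\mathcal{U}^\perp}\big)=\mathbf{1}$.
   Context: $P_{\mathcal{W}}$ is the orthogonal projector onto a subspace $\mathcal{W}$; $\mu(\mathcal{U})=\max_i\|P_{\mathcal{U}}e_i\|_2^2$ is the coherence. $\operatorname{diag}(X)\in\mathbb{R}^n$ is the diagonal of an $n\times n$ matrix $X$, $\operatorname{diag}^*(\lambda)$ is the diagonal matrix with diagonal $\lambda$, and $\mathbf{1}$ is the all-ones vector. *)

theory Defs
  imports "HOL-Analysis.Analysis"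
begin

definition oproj :: "(real^'n) set \<Rightarrow> real^'n \<Rightarrow> real^'n" where
  "oproj W x = (THE p. p \<in> W \<and> x - p \<in> orthogonal_comp W)"

definition proj_matrix :: "(real^'n) set \<Rightarrow> real^'n^'n" where
  "proj_matrix W = (\<chi> i j. oproj W (axis j 1) $ i)"

definition coherence :: "(real^'n::finite) set \<Rightarrow> real" where
  "coherence U = Max (range (\<lambda>i::'n. (norm (oproj U (axis i 1)))\<^sup>2))"

definition diag_mat :: "real^'n \<Rightarrow> real^'n^'n" where
  "diag_mat l = (\<chi> i j. if i = j then l $ i else 0)"

definition diag_vec :: "real^'n^'n \<Rightarrow> real^'n" where
  "diag_vec X = (\<chi> i. X $ i $ i)"

end

theory Submission
  imports Defs
begin

text \<open>
  Write \<open>P\<close> for the projector onto \<open>W = U\<^sup>\<bottom>\<close>. Since \<open>P\<close> is symmetric, the \<open>i\<close>-th diagonal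
  entry of \<open>P diag\<^sup>*(\<lambda>) P\<close> is \<open>\<Sum>\<^sub>j P\<^sub>i\<^sub>j\<^sup>2 \<lambda>\<^sub>j\<close>, so we must solve \<open>C \<lambda> = \<one>\<close> with \<open>\<lambda> \<ge> 0\<close> for the
  entrywise square \<open>C\<close> of \<open>P\<close>. Idempotence gives \<open>\<Sum>\<^sub>j P\<^sub>i\<^sub>j\<^sup>2 = P\<^sub>i\<^sub>i = 1 - \<parallel>P\<^sub>U e\<^sub>i\<parallel>\<^sup>2 > 1/2\<close>, hence
  \<open>C\<^sub>i\<^sub>i = P\<^sub>i\<^sub>i\<^sup>2 > 1/4\<close> while the off-diagonal row sums \<open>P\<^sub>i\<^sub>i - P\<^sub>i\<^sub>i\<^sup>2\<close> are at most \<open>1/4\<close>.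
  For such a diagonally dominant nonnegative matrix the Jacobi step
  \<open>\<lambda>\<^sub>i \<mapsto> \<lambda>\<^sub>i + (1 - (C\<lambda>)\<^sub>i)/C\<^sub>i\<^sub>i\<close> maps the box \<open>[0,4]\<^sup>n\<close> into itself, and a Brouwer fixed point
  is the required \<open>\<lambda>\<close>.
\<close>

lemma oproj_ex1:
  fixes W :: "(real^'n) set"
  assumes "subspace W"
  shows "\<exists>!p. p \<in> W \<and> x - p \<in> orthogonal_comp W"
proof -
  obtain v w where vw: "x = v + w" "v \<in> W" "w \<in> orthogonal_comp W"
    using subspace_sum_orthogonal_comp [OF assms] set_plus_elim by (metis UNIV_I)
  show ?thesis
  proof (rule ex1I[of _ v])
    show "v \<in> W \<and> x - v \<in> orthogonal_comp W" using vw by simp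
  next
    fix p assume p: "p \<in> W \<and> x - p \<in> orthogonal_comp W"
    have "p - v \<in> W" using p vw assms by (simp add: subspace_diff)
    moreover have "p - v = w - (x - p)" using vw by simp
    hence "p - v \<in> orthogonal_comp W" using p vw
      by (metis subspace_diff subspace_orthogonal_comp)
    ultimately have "p - v = 0" using orthogonal_Int_0[OF assms] by blast
    thus "p = v" by simp
  qed
qed

lemma oproj_in:
  fixes W :: "(real^'n) set"
  assumes "subspace W"
  shows "oproj W x \<in> W"
  unfolding oproj_def using theI'[OF oproj_ex1[OF assms]] by blast

lemma oproj_diff_in_orthogonal_comp:
  fixes W :: "(real^'n) set"
  assumes "subspace W"
  shows "x - oproj W x \<in> orthogonal_comp W"
  unfolding oproj_def using theI'[OF oproj_ex1[OF assms]] by blast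

lemma oproj_eqI:
  fixes W :: "(real^'n) set"
  assumes "subspace W" "p \<in> W" "x - p \<in> orthogonal_comp W"
  shows "oproj W x = p"
  unfolding oproj_def using oproj_ex1[OF assms(1), of x] assms(2,3)
  by (simp add: the1_equality)

lemma oproj_orthogonal_comp:
  fixes W :: "(real^'n) set"
  assumes "subspace W"
  shows "oproj (orthogonal_comp W) x = x - oproj W x"
  by (rule oproj_eqI)
     (simp_all add: subspace_orthogonal_comp oproj_diff_in_orthogonal_comp assms
       orthogonal_comp_self oproj_in)

lemma inner_oproj_left:
  fixes W :: "(real^'n) set"
  assumes "subspace W"
  shows "inner (oproj W x) y = inner (oproj W x) (oproj W y)"
proof -
  have "inner (oproj W x) (y - oproj W y) = 0"
    using oproj_in[OF assms] oproj_diff_in_orthogonal_comp[OF assms]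
    unfolding orthogonal_comp_def orthogonal_def by blast
  thus ?thesis by (simp add: inner_diff_right)
qed

lemma proj_matrix_eq_inner:
  fixes W :: "(real^'n) set"
  assumes "subspace W"
  shows "proj_matrix W $ i $ j = inner (oproj W (axis i 1)) (oproj W (axis j 1))"
proof -
  have "proj_matrix W $ i $ j = inner (oproj W (axis j 1)) (axis i 1)"
    by (simp add: proj_matrix_def inner_axis)
  also have "\<dots> = inner (oproj W (axis j 1)) (oproj W (axis i 1))"
    by (rule inner_oproj_left[OF assms])
  finally show ?thesis by (simp add: inner_commute)
qed

lemma proj_matrix_symmetric:
  fixes W :: "(real^'n) set"
  assumes "subspace W"
  shows "proj_matrix W $ i $ j = proj_matrix W $ j $ i"
  by (simp add: proj_matrix_eq_inner[OF assms] inner_commute)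

lemma proj_matrix_diag_eq_norm:
  fixes W :: "(real^'n) set"
  assumes "subspace W"
  shows "proj_matrix W $ i $ i = (norm (oproj W (axis i 1)))\<^sup>2"
  by (simp add: proj_matrix_eq_inner[OF assms] power2_norm_eq_inner)

lemma sum_proj_matrix_row_squares:
  fixes W :: "(real^'n) set"
  assumes "subspace W"
  shows "(\<Sum>j\<in>UNIV. (proj_matrix W $ i $ j)\<^sup>2) = proj_matrix W $ i $ i"
proof -
  have "proj_matrix W $ i $ j = oproj W (axis i 1) $ j" for j
    using proj_matrix_symmetric[OF assms, of i j] by (simp add: proj_matrix_def)
  thus ?thesis
    unfolding proj_matrix_diag_eq_norm[OF assms] power2_norm_eq_inner
    by (simp add: inner_vec_def power2_eq_square)
qed

lemma proj_matrix_orthogonal_comp_diag_gt: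
  fixes U :: "(real^'n) set"
  assumes "subspace U" "coherence U < 1/2"
  shows "proj_matrix (orthogonal_comp U) $ i $ i > 1/2"
proof -
  let ?p = "oproj (orthogonal_comp U) (axis i 1)"
  have sW: "subspace (orthogonal_comp U)" by (rule subspace_orthogonal_comp)
  have "(norm (oproj U (axis i 1)))\<^sup>2 \<le> coherence U"
    unfolding coherence_def by (rule Max_ge) auto
  moreover have "oproj U (axis i 1) = axis i 1 - ?p"
    using oproj_orthogonal_comp[OF sW, of "axis i 1"]
    by (simp add: orthogonal_comp_self[OF assms(1)])
  moreover have "(norm ?p)\<^sup>2 + (norm (axis i 1 - ?p))\<^sup>2 = 1"
  proof -
    have "orthogonal ?p (axis i 1 - ?p)"
      using oproj_in[OF sW, of "axis i 1"] oproj_diff_in_orthogonal_comp[OF sW, of "axis i 1"]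
      unfolding orthogonal_comp_def by (auto simp: orthogonal_commute)
    from norm_add_Pythagorean[OF this] show ?thesis by simp
  qed
  ultimately show ?thesis
    using assms(2) by (simp add: proj_matrix_diag_eq_norm[OF sW])
qed

lemma diag_vec_sandwich_diag_mat:
  "diag_vec (A ** diag_mat l ** B) = (\<chi> i. \<Sum>k\<in>UNIV. A $ i $ k * l $ k * B $ k $ i)"
proof -
  have "(\<Sum>m\<in>UNIV. A $ i $ m * (if m = k then l $ m else 0)) = A $ i $ k * l $ k" for i k
    by (simp add: if_distrib[of "\<lambda>x. A $ i $ _ * x"] cong: if_cong)
  thus ?thesis
    unfolding diag_vec_def matrix_matrix_mult_def diag_mat_def by (simp add: vec_eq_iff)
qed

lemma jacobi_step_in_box:
  fixes C :: "real^'n^'n" and b :: real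
  assumes nonneg: "\<And>i j. C $ i $ j \<ge> 0"
    and off_diag: "\<And>i. (\<Sum>j\<in>UNIV - {i}. C $ i $ j) \<le> b"
    and diag: "\<And>i. b \<le> C $ i $ i" and "b > 0"
    and l: "\<And>j. 0 \<le> l $ j \<and> l $ j \<le> 1 / b"
  shows "0 \<le> l $ i + (1 - (C *v l) $ i) / C $ i $ i \<and> l $ i + (1 - (C *v l) $ i) / C $ i $ i \<le> 1 / b"
proof -
  define R where "R = (\<Sum>j\<in>UNIV - {i}. C $ i $ j * l $ j)"
  have Cii: "C $ i $ i > 0" using diag[of i] \<open>b > 0\<close> by linarith
  have "(C *v l) $ i = C $ i $ i * l $ i + R"
    unfolding R_def matrix_vector_mult_def by (simp add: sum.remove)
  hence step: "l $ i + (1 - (C *v l) $ i) / C $ i $ i = (1 - R) / C $ i $ i"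
    using Cii by (simp add: field_simps)
  have "R \<ge> 0" unfolding R_def using l nonneg by (simp add: sum_nonneg)
  have "R \<le> (\<Sum>j\<in>UNIV - {i}. C $ i $ j * (1 / b))"
    unfolding R_def using l nonneg by (intro sum_mono mult_left_mono) auto
  also have "\<dots> = (\<Sum>j\<in>UNIV - {i}. C $ i $ j) / b"
    by (simp add: sum_divide_distrib)
  also have "\<dots> \<le> 1"
    using off_diag[of i] \<open>b > 0\<close> by simp
  finally have "R \<le> 1" .
  moreover have "1 / C $ i $ i \<le> 1 / b" using diag[of i] \<open>b > 0\<close> by (simp add: frac_le)
  ultimately show ?thesis
    using \<open>R \<ge> 0\<close> Cii step by (auto simp: divide_le_eq field_simps)
qed

lemma diagonally_dominant_nonneg_solution:
  fixes C :: "real^'n^'n" and b :: real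
  assumes nonneg: "\<And>i j. C $ i $ j \<ge> 0"
    and off_diag: "\<And>i. (\<Sum>j\<in>UNIV - {i}. C $ i $ j) \<le> b"
    and diag: "\<And>i. b \<le> C $ i $ i" and "b > 0"
  shows "\<exists>l. (\<forall>i. l $ i \<ge> 0) \<and> C *v l = 1"
proof -
  define T where "T l = (\<chi> i. l $ i + (1 - (C *v l) $ i) / C $ i $ i)" for l :: "real^'n"
  define S where "S = cbox (0::real^'n) (\<chi> i. 1 / b)"
  have Cii: "C $ i $ i \<noteq> 0" for i using diag[of i] \<open>b > 0\<close> by linarith
  have "T l \<in> S" if "l \<in> S" for l
    using jacobi_step_in_box[OF nonneg off_diag diag \<open>b > 0\<close>, of l] that
    unfolding S_def T_def mem_box_cart by simp
  hence "T \<in> S \<rightarrow> S" by blast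
  moreover have "continuous_on S T"
    unfolding T_def matrix_vector_mult_def by (intro continuous_intros) (simp add: Cii)
  moreover have "0 \<in> S" using \<open>b > 0\<close> unfolding S_def by (simp add: mem_box_cart)
  hence "S \<noteq> {}" by blast
  ultimately obtain l where "l \<in> S" "T l = l"
    using brouwer[of S T] unfolding S_def by auto
  hence "\<forall>i. l $ i \<ge> 0" and "C *v l = 1"
    using Cii unfolding S_def T_def mem_box_cart by (auto simp: vec_eq_iff)
  thus ?thesis by blast
qed

theorem lemmaA1:
  fixes U :: "(real^'n) set"
  assumes "subspace U"
    and "coherence U < 1/2"
  shows "\<exists>l :: real^'n. (\<forall>i. l $ i \<ge> 0) \<and>
    diag_vec (proj_matrix (orthogonal_comp U) ** diag_mat l ** proj_matrix (orthogonal_comp U)) = 1"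
proof -
  define P where "P = proj_matrix (orthogonal_comp U)"
  define C where "C = (\<chi> i j. (P $ i $ j)\<^sup>2)"
  have sW: "subspace (orthogonal_comp U)" by (rule subspace_orthogonal_comp)
  have Pii: "P $ i $ i > 1/2" for i
    unfolding P_def using proj_matrix_orthogonal_comp_diag_gt[OF assms] .
  have "(\<Sum>j\<in>UNIV - {i}. C $ i $ j) = P $ i $ i - (P $ i $ i)\<^sup>2" for i
    using sum_proj_matrix_row_squares[OF sW, of i] sum.remove[of UNIV i "\<lambda>j. (P $ i $ j)\<^sup>2"]
    unfolding C_def P_def by simp
  moreover have "P $ i $ i - (P $ i $ i)\<^sup>2 \<le> 1/4" for i
    using sum_power2_ge_zero[of "P $ i $ i - 1/2" 0] by (simp add: power2_eq_square algebra_simps)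
  moreover have "1/4 \<le> C $ i $ i" for i
    using Pii[of i] mult_mono[of "1/2" "P $ i $ i" "1/2" "P $ i $ i"]
    unfolding C_def by (simp add: power2_eq_square)
  ultimately obtain l where l: "\<forall>i. l $ i \<ge> 0" "C *v l = 1"
    using diagonally_dominant_nonneg_solution[of C "1/4"] unfolding C_def by fastforce
  have "diag_vec (P ** diag_mat l ** P) = C *v l"
    unfolding diag_vec_sandwich_diag_mat C_def P_def matrix_vector_mult_def
    by (simp add: vec_eq_iff proj_matrix_symmetric[OF sW, of _ _] power2_eq_square mult_ac)
  thus ?thesis using l unfolding P_def by auto
qed

end
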